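(* Let $K$ be a Pick kernel on $\Lambda$, $\mathcal G$ a Hilbert space, and $\mathcal N$ a Hilbert space contractively included in $\mathfrak H(K)\otimes\mathcal G$ such that $(\mathbf B^*\otimes I_{\mathcal G})\mathcal N\subset\mathcal B\otimes\mathcal N$. Let $\mathbf a=(\mathbf B^*\otimes I_{\mathcal G})|_{\mathcal N}:\mathcal N\to\mathcal B\otimes\mathcal N$, and for $\xi\in\mathcal B$ put $\mathbf a_\xi=(L^{\mathcal N}_\xi)^*\mathbf a:\mathcal N\to\mathcal N$. Then $\mathbf a_\xi\mathbf a_\eta=\mathbf a_\eta\mathbf a_\xi$ for all $\xi,\eta\in\mathcal B$.
   Context: $\mathfrak H(K)$ is the reproducing kernel Hilbert space of $K$, $k_\lambda(\mu)=K(\mu,\lambda)$. Pick kernel: there are $\lambda_0\in\Lambda$, a Hilbert space $\mathcal B$ and $\beta:\Lambda\to\mathcal B$ with dense span of values such that $K(\mu,\lambda)=\delta(\mu)\overline{\delta(\lambda)}/(1-\langle\beta(\lambda),\beta(\mu)\rangle)$, $\delta=k_{\lambda_0}/\|k_{\lambda_0}\|$. $\mathbf B:\mathcal B\otimes\mathfrak H(K)\to\mathfrak H(K)$ is the contraction with $\mathbf B^*k_\lambda=\beta(\lambda)\otimes k_\lambda$. Contractive inclusion: $\mathcal N\subset\mathcal H$ with $\|x\|_{\mathcal H}\le\|x\|_{\mathcal N}$; $\mathcal B\otimes\mathcal N$ is the Hilbert tensor product, viewed as a vector subspace of $\mathcal B\otimes\mathfrak H(K)\otimes\mathcal G$ via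 $I_{\mathcal B}\otimes(\text{inclusion})$. For a Hilbert space $\mathcal X$ and $\xi\in\mathcal B$, $L^{\mathcal X}_\xi:\mathcal X\to\mathcal B\otimes\mathcal X$, $x\mapsto\xi\otimes x$, whose adjoint satisfies $(L^{\mathcal X}_\xi)^*(\eta\otimes x)=\langle\eta,\xi\rangle x$. *)

theory Defs
  imports "HOL-Analysis.Analysis"
begin

class scaleC = fixes scaleC :: "complex \<Rightarrow> 'a \<Rightarrow> 'a" (infixr \<open>*\<^sub>C\<close> 75)

class complex_vector = real_vector + scaleC +
  assumes scaleC_add_right: "a *\<^sub>C (x + y) = a *\<^sub>C x + a *\<^sub>C y"
    and scaleC_add_left: "(a + b) *\<^sub>C x = a *\<^sub>C x + b *\<^sub>C x"
    and scaleC_scaleC: "a *\<^sub>C (b *\<^sub>C x) = (a * b) *\<^sub>C x"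
    and scaleC_one: "1 *\<^sub>C x = x"
    and scaleC_of_real: "complex_of_real r *\<^sub>C x = r *\<^sub>R x"

text \<open>Complex inner product spaces; the inner product is linear in the first
  argument and conjugate-linear in the second (convention of the paper).\<close>
class complex_inner = complex_vector + real_normed_vector +
  fixes cinner :: "'a \<Rightarrow> 'a \<Rightarrow> complex"
  assumes cinner_commute: "cinner x y = cnj (cinner y x)"
    and cinner_add_left: "cinner (x + y) z = cinner x z + cinner y z"
    and cinner_scaleC_left: "cinner (a *\<^sub>C x) y = a * cinner x y"
    and cinner_ge_zero: "Im (cinner x x) = 0 \<and> Re (cinner x x) \<ge> 0"
    and cinner_eq_zero_iff: "cinner x x = 0 \<longleftrightarrow> x = 0"
    and norm_eq_sqrt_cinner: "norm x = sqrt (Re (cinner x x))"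

class chilbert = complex_inner + complete_space

definition clinear :: "('a::complex_vector \<Rightarrow> 'b::complex_vector) \<Rightarrow> bool" where
  "clinear f \<longleftrightarrow> (\<forall>x y. f (x + y) = f x + f y) \<and> (\<forall>c x. f (c *\<^sub>C x) = c *\<^sub>C f x)"

definition bounded_clinear :: "('a::complex_inner \<Rightarrow> 'b::complex_inner) \<Rightarrow> bool" where
  "bounded_clinear f \<longleftrightarrow> clinear f \<and> (\<exists>C. \<forall>x. norm (f x) \<le> C * norm x)"

definition cspan :: "'a::complex_vector set \<Rightarrow> 'a set" where
  "cspan S = span {c *\<^sub>C x | c x. x \<in> S}"

definition cadjoint :: "('a::complex_inner \<Rightarrow> 'b::complex_inner) \<Rightarrow> 'b \<Rightarrow> 'a" where
  "cadjoint f y = (THE z. \<forall>x. cinner (f x) y = cinner x z)"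

text \<open>\<open>t\<close> exhibits \<open>'c\<close> as the Hilbert tensor product of \<open>'a\<close> and \<open>'b\<close>,
  with \<open>t x y = x \<otimes> y\<close>: \<open>t\<close> is bilinear, satisfies
  \<open>\<langle>x\<otimes>y, x'\<otimes>y'\<rangle> = \<langle>x,x'\<rangle>\<langle>y,y'\<rangle>\<close>, and the elementary tensors
  span a dense subspace.  This determines the Hilbert tensor product up to a
  unitary identification fixing elementary tensors.\<close>
definition is_tensor_product ::
  "('a::complex_inner \<Rightarrow> 'b::complex_inner \<Rightarrow> 'c::complex_inner) \<Rightarrow> bool" where
  "is_tensor_product t \<longleftrightarrow>
     (\<forall>y. clinear (\<lambda>x. t x y)) \<and> (\<forall>x. clinear (\<lambda>y. t x y)) \<and>
     (\<forall>x y x' y'. cinner (t x y) (t x' y') = cinner x x' * cinner y y') \<and>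
     closure (cspan (range (\<lambda>(x, y). t x y))) = UNIV"

text \<open>\<open>k\<close> exhibits \<open>'h\<close> as the reproducing kernel Hilbert space \<open>\<HH>(K)\<close>,
  \<open>k \<lambda>\<close> being the kernel function \<open>k_\<lambda>\<close>:
  \<open>k_\<lambda>(\<mu>) = \<langle>k_\<lambda>, k_\<mu>\<rangle> = K(\<mu>,\<lambda>)\<close> and the \<open>k_\<lambda>\<close> span a dense subspace.\<close>
definition is_rkhs :: "('l \<Rightarrow> 'l \<Rightarrow> complex) \<Rightarrow> ('l \<Rightarrow> 'h::complex_inner) \<Rightarrow> bool" where
  "is_rkhs K k \<longleftrightarrow> (\<forall>l m. cinner (k l) (k m) = K m l) \<and> closure (cspan (range k)) = UNIV"

text \<open>Pick kernel with data \<open>l\<^sub>0\<close>, \<open>\<beta>\<close>: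
  \<open>\<delta> = k_{l\<^sub>0}/\<parallel>k_{l\<^sub>0}\<parallel>\<close>, i.e. \<open>\<delta>(\<mu>) = K(\<mu>,l\<^sub>0)/\<surd>K(l\<^sub>0,l\<^sub>0)\<close>.\<close>
definition pick_delta :: "('l \<Rightarrow> 'l \<Rightarrow> complex) \<Rightarrow> 'l \<Rightarrow> 'l \<Rightarrow> complex" where
  "pick_delta K l\<^sub>0 m = K m l\<^sub>0 / complex_of_real (sqrt (Re (K l\<^sub>0 l\<^sub>0)))"

definition is_pick_kernel ::
  "('l \<Rightarrow> 'l \<Rightarrow> complex) \<Rightarrow> 'l \<Rightarrow> ('l \<Rightarrow> 'b::complex_inner) \<Rightarrow> bool" where
  "is_pick_kernel K l\<^sub>0 \<beta> \<longleftrightarrow>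
     closure (cspan (range \<beta>)) = UNIV \<and>
     (\<forall>m l. cinner (\<beta> l) (\<beta> m) \<noteq> 1 \<and>
        K m l = pick_delta K l\<^sub>0 m * cnj (pick_delta K l\<^sub>0 l) / (1 - cinner (\<beta> l) (\<beta> m)))"

end

theory Submission
  imports Defs
begin

text \<open>For \<open>\<N> = \<HH>(K) \<otimes> \<G>\<close> the operators \<open>\<a>\<^sub>\<xi>\<close> act on \<open>h \<otimes> g\<close> as \<open>M\<^sub>\<xi> h \<otimes> g\<close> with
  \<open>M\<^sub>\<xi> = (L\<^sub>\<xi>)\<^sup>* \<B>\<^sup>*\<close>, and \<open>\<B>\<^sup>* k\<^sub>\<lambda> = \<beta>(\<lambda>) \<otimes> k\<^sub>\<lambda>\<close> makes every kernel function an
  eigenvector of every \<open>M\<^sub>\<xi>\<close>, with eigenvalue \<open>\<langle>\<beta>(\<lambda>), \<xi>\<rangle>\<close>; since the kernel functions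
  span a dense subspace, the \<open>M\<^sub>\<xi>\<close>, hence the \<open>\<a>\<^sub>\<xi>\<close>, commute.  For general \<open>\<N>\<close>,
  invariance gives \<open>\<iota> \<a>\<^sub>\<xi> = (L\<^sub>\<xi>)\<^sup>* (\<B>\<^sup>* \<otimes> I) \<iota>\<close>, so \<open>\<iota> \<a>\<^sub>\<xi> \<a>\<^sub>\<eta>\<close> is symmetric
  in \<open>\<xi>, \<eta>\<close>, and \<open>\<iota>\<close> is injective.\<close>

lemma scaleC_zero_left[simp]: "0 *\<^sub>C (x::'a::complex_vector) = 0"
  using scaleC_of_real[of 0 x] by simp

lemma cinner_add_right: "cinner x (y + z) = cinner x y + cinner (x::'a::complex_inner) z"
proof -
  have "cinner x (y + z) = cnj (cinner (y + z) x)" by (rule cinner_commute)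
  also have "\<dots> = cnj (cinner y x) + cnj (cinner z x)" by (simp add: cinner_add_left)
  also have "\<dots> = cinner x y + cinner x z" by (simp only: cinner_commute[of x y, symmetric] cinner_commute[of x z, symmetric])
  finally show ?thesis .
qed

lemma cinner_scaleC_right: "cinner x (a *\<^sub>C y) = cnj a * cinner (x::'a::complex_inner) y"
proof -
  have "cinner x (a *\<^sub>C y) = cnj (cinner (a *\<^sub>C y) x)" by (rule cinner_commute)
  also have "\<dots> = cnj a * cnj (cinner y x)" by (simp add: cinner_scaleC_left)
  also have "\<dots> = cnj a * cinner x y" by (simp only: cinner_commute[of x y, symmetric])
  finally show ?thesis .
qed

lemma cinner_zero_left[simp]: "cinner 0 (y::'a::complex_inner) = 0"
  using cinner_scaleC_left[of 0 0 y] by simp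

lemma cinner_zero_right[simp]: "cinner (x::'a::complex_inner) 0 = 0"
  using cinner_scaleC_right[of x 0 0] by simp

lemma cinner_minus_left: "cinner (- x) (y::'a::complex_inner) = - cinner x y"
proof -
  have "cinner (- x) y + cinner x y = 0" using cinner_add_left[of "-x" x y, symmetric] by simp
  then show ?thesis by (simp add: eq_neg_iff_add_eq_0)
qed

lemma cinner_minus_right: "cinner x (- y::'a::complex_inner) = - cinner x y"
proof -
  have "cinner x (- y) + cinner x y = 0" using cinner_add_right[of x "-y" y, symmetric] by simp
  then show ?thesis by (simp add: eq_neg_iff_add_eq_0)
qed

lemma cinner_diff_left: "cinner (x - z) (y::'a::complex_inner) = cinner x y - cinner z y"
  by (simp only: diff_conv_add_uminus cinner_add_left cinner_minus_left)

lemma cinner_diff_right: "cinner x (y - z::'a::complex_inner) = cinner x y - cinner x z"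
  by (simp only: diff_conv_add_uminus cinner_add_right cinner_minus_right)

lemma cinner_scaleR_left: "cinner (r *\<^sub>R x) (y::'a::complex_inner) = complex_of_real r * cinner x y"
  using cinner_scaleC_left[of "complex_of_real r" x y] by (simp add: scaleC_of_real)

lemma cinner_scaleR_right: "cinner x (r *\<^sub>R y::'a::complex_inner) = complex_of_real r * cinner x y"
  using cinner_scaleC_right[of x "complex_of_real r" y] by (simp add: scaleC_of_real)

lemma norm_sq_cinner: "(norm (x::'a::complex_inner))\<^sup>2 = Re (cinner x x)"
  by (simp add: norm_eq_sqrt_cinner cinner_ge_zero)

lemma cinner_self: "cinner x (x::'a::complex_inner) = complex_of_real ((norm x)\<^sup>2)"
  by (simp add: norm_sq_cinner complex_eqI cinner_ge_zero)

lemma cauchy_schwarz: "norm (cinner x y) \<le> norm x * norm (y::'a::complex_inner)"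
proof (cases "y = 0")
  case True then show ?thesis by simp
next
  case False
  define b where "b = (norm y)\<^sup>2"
  have bpos: "b > 0" using False by (simp add: b_def)
  define p where "p = cinner x y"
  define t where "t = p / complex_of_real b"
  have hyy: "cinner y y = complex_of_real b" unfolding b_def by (rule cinner_self)
  have "cinner (x - t *\<^sub>C y) (x - t *\<^sub>C y)
        = cinner x x - cnj t * p - t * cnj p + t * cnj t * complex_of_real b"
    by (simp add: cinner_diff_left cinner_diff_right cinner_scaleC_left cinner_scaleC_right
        p_def hyy algebra_simps cinner_commute[of y x])
  also have "\<dots> = cinner x x - p * cnj p / complex_of_real b"
  proof -
    have "cnj t = cnj p / complex_of_real b" by (simp add: t_def)
    then show ?thesis using bpos unfolding t_def by (simp add: divide_simps)
  qed
  finally have eq: "cinner (x - t *\<^sub>C y) (x - t *\<^sub>C y) = cinner x x - p * cnj p / complex_of_real b" .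
  have "0 \<le> Re (cinner (x - t *\<^sub>C y) (x - t *\<^sub>C y))" using cinner_ge_zero by blast
  also have "\<dots> = (norm x)\<^sup>2 - (norm p)\<^sup>2 / b"
    unfolding eq using bpos by (simp add: cinner_self complex_mult_cnj cmod_def Re_divide power2_eq_square)
  finally have "(norm p)\<^sup>2 \<le> (norm x)\<^sup>2 * b" using bpos by (simp add: field_simps)
  then have "(norm p)\<^sup>2 \<le> (norm x * norm y)\<^sup>2" by (simp add: b_def power_mult_distrib)
  then show ?thesis unfolding p_def
    using power2_le_imp_le by (metis mult_nonneg_nonneg norm_ge_zero)
qed

lemma clinear_linear: "clinear f \<Longrightarrow> linear f"
  unfolding clinear_def linear_iff by (metis scaleC_of_real)

lemma bounded_clinear_nonneg_bound:
  assumes "bounded_clinear f" shows "\<exists>C\<ge>0. \<forall>x. norm (f x) \<le> C * norm x"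
proof -
  obtain C where C: "\<forall>x. norm (f x) \<le> C * norm x" using assms unfolding bounded_clinear_def by blast
  have "\<forall>x. norm (f x) \<le> max C 0 * norm x"
    by (metis C max.cobounded1 mult_right_mono norm_ge_zero order.trans)
  then show ?thesis by (intro exI[of _ "max C 0"]) auto
qed

lemma bounded_clinear_bounded_linear: "bounded_clinear f \<Longrightarrow> bounded_linear f"
proof -
  assume a: "bounded_clinear f"
  then have l: "linear f" by (simp add: bounded_clinear_def clinear_linear)
  obtain C where "C\<ge>0" "\<forall>x. norm (f x) \<le> C * norm x" using bounded_clinear_nonneg_bound[OF a] by blast
  then show ?thesis using l
    by (intro bounded_linear_intro[where K=C]) (auto simp: linear_iff mult.commute)
qed

lemma bounded_clinear_add: "bounded_clinear f \<Longrightarrow> f (x + y) = f x + f y"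
  by (simp add: bounded_clinear_def clinear_def)

lemma bounded_clinear_scaleC: "bounded_clinear f \<Longrightarrow> f (c *\<^sub>C x) = c *\<^sub>C f x"
  by (simp add: bounded_clinear_def clinear_def)

lemma bounded_clinear_zero: "bounded_clinear f \<Longrightarrow> f 0 = 0"
  using bounded_clinear_bounded_linear linear_simps(3) by blast

lemma bounded_clinear_diff: "bounded_clinear f \<Longrightarrow> f (x - y) = f x - f y"
  using bounded_clinear_bounded_linear linear_simps(2) by blast

lemma bounded_clinear_compose: assumes "bounded_clinear f" "bounded_clinear g"
  shows "bounded_clinear (\<lambda>x. f (g x))"
proof -
  obtain C where C: "C\<ge>0" "\<forall>x. norm (f x) \<le> C * norm x" using bounded_clinear_nonneg_bound[OF assms(1)] by blast
  obtain D where D: "D\<ge>0" "\<forall>x. norm (g x) \<le> D * norm x" using bounded_clinear_nonneg_bound[OF assms(2)] by blast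
  have "norm (f (g x)) \<le> (C * D) * norm x" for x
  proof -
    have "norm (f (g x)) \<le> C * norm (g x)" using C by blast
    also have "\<dots> \<le> C * (D * norm x)" using C D by (simp add: mult_left_mono)
    finally show ?thesis by simp
  qed
  then show ?thesis using assms unfolding bounded_clinear_def clinear_def by auto
qed

lemma cinner_bounded_linear_left: "bounded_linear (\<lambda>x. cinner x (y::'a::complex_inner))"
  by (rule bounded_linear_intro[where K="norm y"])
     (auto simp: cinner_add_left cinner_scaleR_left scaleR_conv_of_real cauchy_schwarz)

lemma cinner_bounded_linear_right: "bounded_linear (\<lambda>y. cinner (x::'a::complex_inner) y)"
  by (rule bounded_linear_intro[where K="norm x"])
     (auto simp: cinner_add_right cinner_scaleR_right scaleR_conv_of_real cauchy_schwarz mult.commute[of _ "norm x"])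

lemma subspace_eq_UNIV_if_dense_cspan:
  fixes W :: "'a::complex_inner set"
  assumes "closure (cspan S) = UNIV" "closed W" "subspace W" "\<And>c x. x \<in> S \<Longrightarrow> c *\<^sub>C x \<in> W"
  shows "W = UNIV"
proof -
  have "{c *\<^sub>C x | c x. x \<in> S} \<subseteq> W" using assms(4) by blast
  then have "cspan S \<subseteq> W" unfolding cspan_def using assms(3) by (rule span_minimal)
  then have "closure (cspan S) \<subseteq> W" using assms(2) by (rule closure_minimal)
  then show ?thesis using assms(1) by blast
qed

lemma bounded_clinear_eq_on_dense:
  fixes f g :: "'a::complex_inner \<Rightarrow> 'b::complex_inner"
  assumes "bounded_clinear f" "bounded_clinear g" "closure (cspan S) = UNIV" "\<And>x. x \<in> S \<Longrightarrow> f x = g x"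
  shows "f y = g y"
proof -
  have bf: "bounded_linear f" and bg: "bounded_linear g" using assms bounded_clinear_bounded_linear by auto
  have cl: "closed {x. f x = g x}"
    by (intro closed_Collect_eq continuous_on_id linear_continuous_on bf bg)
  have sub: "subspace {x. f x = g x}"
    using bf bg unfolding subspace_def by (auto simp: linear_simps)
  have "{x. f x = g x} = UNIV"
    by (rule subspace_eq_UNIV_if_dense_cspan[OF assms(3) cl sub]) (simp add: assms(4) bounded_clinear_scaleC[OF assms(1)] bounded_clinear_scaleC[OF assms(2)])
  then show ?thesis by blast
qed

section \<open>Adjoints\<close>

lemma cinner_ext: "(\<And>n. cinner n z = cinner n (z'::'a::complex_inner)) \<Longrightarrow> z = z'"
  by (metis cinner_diff_right cinner_eq_zero_iff eq_iff_diff_eq_0)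

lemma norm_adjoint_bound:
  fixes f :: "'a::complex_inner \<Rightarrow> 'b::complex_inner"
  assumes "\<forall>n. cinner (f n) w = cinner n z" "\<forall>x. norm (f x) \<le> C * norm x" "C \<ge> 0"
  shows "norm z \<le> C * norm w"
proof (cases "z = 0")
  case True then show ?thesis using assms by simp
next
  case False
  have "(norm z)\<^sup>2 = norm (cinner z z)" unfolding cinner_self norm_of_real by simp
  also have "\<dots> = norm (cinner (f z) w)" using assms(1) by simp
  also have "\<dots> \<le> norm (f z) * norm w" by (rule cauchy_schwarz)
  also have "\<dots> \<le> C * norm z * norm w" using assms(2) by (simp add: mult_right_mono)
  finally have "norm z * norm z \<le> norm z * (C * norm w)" by (simp add: power2_eq_square algebra_simps)
  then show ?thesis using False by simp
qed

lemma cadjoint_eqI: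
  assumes "\<forall>n. cinner (f n) w = cinner n z"
  shows "cadjoint f w = z"
  unfolding cadjoint_def by (rule the_equality) (use assms cinner_ext in auto)

lemma Cauchy_if_dominated:
  fixes x :: "nat \<Rightarrow> 'a::real_normed_vector" and z :: "nat \<Rightarrow> 'b::real_normed_vector"
  assumes x: "Cauchy x" and C: "C \<ge> 0" and dom: "\<And>m n. norm (z m - z n) \<le> C * norm (x m - x n)"
  shows "Cauchy z"
proof (rule CauchyI)
  fix e :: real assume e: "e > 0"
  then obtain M where M: "\<forall>m\<ge>M. \<forall>n\<ge>M. norm (x m - x n) < e / (C + 1)"
    using x C unfolding Cauchy_iff by (metis add_nonneg_pos divide_pos_pos zero_less_one)
  have "norm (z m - z n) < e" if "m \<ge> M" "n \<ge> M" for m n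
  proof -
    have "norm (z m - z n) \<le> C * (e / (C + 1))"
      using dom[of m n] M that C by (smt (verit) mult_left_mono)
    also have "\<dots> < e" using C e by (simp add: field_simps)
    finally show ?thesis .
  qed
  then show "\<exists>M. \<forall>m\<ge>M. \<forall>n\<ge>M. norm (z m - z n) < e" by blast
qed

lemma subspace_adjoint_representable:
  "subspace {w. \<exists>z. \<forall>n. cinner (f n) w = cinner n (z::'a::complex_inner)}"
  unfolding subspace_def
proof (intro conjI ballI allI)
  fix x y assume "x \<in> {w. \<exists>z. \<forall>n. cinner (f n) w = cinner n z}" "y \<in> {w. \<exists>z. \<forall>n. cinner (f n) w = cinner n z}"
  then obtain z1 z2 where "\<forall>n. cinner (f n) x = cinner n z1" "\<forall>n. cinner (f n) y = cinner n z2" by blast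
  then show "x + y \<in> {w. \<exists>z. \<forall>n. cinner (f n) w = cinner n z}"
    by (auto simp: cinner_add_right intro!: exI[of _ "z1 + z2"])
next
  fix c :: real and x assume "x \<in> {w. \<exists>z. \<forall>n. cinner (f n) w = cinner n z}"
  then obtain z where "\<forall>n. cinner (f n) x = cinner n z" by blast
  then show "c *\<^sub>R x \<in> {w. \<exists>z. \<forall>n. cinner (f n) w = cinner n z}"
    by (auto simp: cinner_scaleR_right intro!: exI[of _ "c *\<^sub>R z"])
qed (auto intro: exI[of _ 0])

lemma closed_adjoint_representable:
  fixes f :: "'a::chilbert \<Rightarrow> 'b::complex_inner"
  assumes "bounded_clinear f"
  shows "closed {w. \<exists>z. \<forall>n. cinner (f n) w = cinner n z}"
  unfolding closed_sequential_limits
proof (intro allI impI, elim conjE)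
  obtain C where C: "C \<ge> 0" "\<forall>x. norm (f x) \<le> C * norm x"
    using bounded_clinear_nonneg_bound[OF assms] by blast
  fix x l assume "\<forall>k. x k \<in> {w. \<exists>z. \<forall>n. cinner (f n) w = cinner n z}" and lim: "x \<longlonglongrightarrow> l"
  then have "\<forall>k. \<exists>zk. \<forall>n. cinner (f n) (x k) = cinner n zk" by blast
  then obtain z where z: "\<forall>k n. cinner (f n) (x k) = cinner n (z k)" by metis
  have "Cauchy z"
  proof (rule Cauchy_if_dominated[OF LIMSEQ_imp_Cauchy[OF lim] C(1)])
    show "norm (z m - z j) \<le> C * norm (x m - x j)" for m j
      by (rule norm_adjoint_bound[OF _ C(2) C(1)]) (simp add: z cinner_diff_right)
  qed
  then obtain L where L: "z \<longlonglongrightarrow> L" using Cauchy_convergent_iff convergent_def by blast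
  have "cinner (f n) l = cinner n L" for n
  proof (rule LIMSEQ_unique)
    show "(\<lambda>k. cinner (f n) (x k)) \<longlonglongrightarrow> cinner (f n) l"
      by (rule bounded_linear.tendsto[OF cinner_bounded_linear_right lim])
    show "(\<lambda>k. cinner (f n) (x k)) \<longlonglongrightarrow> cinner n L"
      using bounded_linear.tendsto[OF cinner_bounded_linear_right L] z by simp
  qed
  then show "l \<in> {w. \<exists>z. \<forall>n. cinner (f n) w = cinner n z}" by blast
qed

text \<open>Without a Riesz representation theorem for this class, the adjoint is obtained by
  showing that the vectors at which it exists form a closed subspace, so a dense spanning
  family of such vectors suffices.\<close>
lemma cinner_cadjoint_of_dense:
  fixes f :: "'a::chilbert \<Rightarrow> 'b::complex_inner"
  assumes f: "bounded_clinear f" and dense: "closure (cspan S) = UNIV"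
    and gen: "\<And>c s. s \<in> S \<Longrightarrow> \<exists>z. \<forall>n. cinner (f n) (c *\<^sub>C s) = cinner n z"
  shows "cinner (f n) w = cinner n (cadjoint f w)"
proof -
  have "{w. \<exists>z. \<forall>n. cinner (f n) w = cinner n z} = UNIV"
    by (rule subspace_eq_UNIV_if_dense_cspan[OF dense closed_adjoint_representable[OF f]
          subspace_adjoint_representable]) (use gen in auto)
  then obtain z where z: "\<forall>n. cinner (f n) w = cinner n z" by blast
  then show ?thesis using cadjoint_eqI[OF z] by simp
qed

lemma bounded_clinear_cadjoint:
  fixes f :: "'a::complex_inner \<Rightarrow> 'b::complex_inner"
  assumes bf: "bounded_clinear f" and adj: "\<And>n w. cinner (f n) w = cinner n (cadjoint f w)"
  shows "bounded_clinear (cadjoint f)"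
proof -
  obtain C where C: "C \<ge> 0" "\<forall>x. norm (f x) \<le> C * norm x" using bounded_clinear_nonneg_bound[OF bf] by blast
  have "clinear (cadjoint f)" unfolding clinear_def
  proof (intro conjI allI)
    fix x y show "cadjoint f (x + y) = cadjoint f x + cadjoint f y"
      by (rule cinner_ext) (simp add: cinner_add_right adj[symmetric])
  next
    fix c x show "cadjoint f (c *\<^sub>C x) = c *\<^sub>C cadjoint f x"
      by (rule cinner_ext) (simp add: cinner_scaleC_right adj[symmetric])
  qed
  moreover have "norm (cadjoint f w) \<le> C * norm w" for w
    by (rule norm_adjoint_bound[OF _ C(2) C(1)]) (simp add: adj)
  ultimately show ?thesis unfolding bounded_clinear_def by blast
qed

section \<open>Tensor products and creation operators\<close>

lemma tensor_cinner: "is_tensor_product t \<Longrightarrow> cinner (t x y) (t x' y') = cinner x x' * cinner y y'"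
  unfolding is_tensor_product_def by blast

lemma tensor_dense: "is_tensor_product t \<Longrightarrow> closure (cspan (range (\<lambda>(x, y). t x y))) = UNIV"
  unfolding is_tensor_product_def by blast

lemma tensor_norm: assumes "is_tensor_product t" shows "norm (t x y) = norm x * norm y"
proof -
  have "(norm (t x y))\<^sup>2 = Re (cinner (t x y) (t x y))" by (rule norm_sq_cinner)
  also have "\<dots> = Re (cinner x x * cinner y y)" by (simp add: tensor_cinner[OF assms])
  also have "\<dots> = (norm x * norm y)\<^sup>2"
    by (simp only: cinner_self of_real_mult[symmetric] Re_complex_of_real power_mult_distrib)
  finally have "(norm (t x y))\<^sup>2 = (norm x * norm y)\<^sup>2" .
  then show ?thesis by (simp add: power2_eq_iff_nonneg)
qed

lemma tensor_bounded_clinear_right: assumes "is_tensor_product t" shows "bounded_clinear (t \<xi>)"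
proof -
  have "clinear (t \<xi>)" using assms unfolding is_tensor_product_def by blast
  moreover have "\<forall>x. norm (t \<xi> x) \<le> norm \<xi> * norm x" by (simp add: tensor_norm[OF assms])
  ultimately show ?thesis unfolding bounded_clinear_def by blast
qed

lemma tensor_bounded_clinear_left: assumes "is_tensor_product t" shows "bounded_clinear (\<lambda>x. t x y)"
proof -
  have "clinear (\<lambda>x. t x y)" using assms unfolding is_tensor_product_def by blast
  moreover have "\<forall>x. norm (t x y) \<le> norm y * norm x" by (simp add: tensor_norm[OF assms] mult.commute)
  ultimately show ?thesis unfolding bounded_clinear_def by blast
qed

lemma tensor_cinner_cadjoint:
  fixes t :: "'b::complex_inner \<Rightarrow> 'n::chilbert \<Rightarrow> 'c::complex_inner"
  assumes tp: "is_tensor_product t"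
  shows "cinner (t \<xi> n) w = cinner n (cadjoint (t \<xi>) w)"
proof (rule cinner_cadjoint_of_dense[OF tensor_bounded_clinear_right[OF tp] tensor_dense[OF tp]])
  fix c s assume "s \<in> range (\<lambda>(x, y). t x y)"
  then obtain \<eta> x where s: "s = t \<eta> x" by auto
  show "\<exists>z. \<forall>n. cinner (t \<xi> n) (c *\<^sub>C s) = cinner n z"
    by (intro exI[of _ "(c * cinner \<eta> \<xi>) *\<^sub>C x"])
       (simp add: s cinner_scaleC_right tensor_cinner[OF tp] cinner_commute[of \<eta> \<xi>])
qed

lemma tensor_cadjoint_bounded_clinear:
  fixes t :: "'b::complex_inner \<Rightarrow> 'n::chilbert \<Rightarrow> 'c::complex_inner"
  assumes tp: "is_tensor_product t"
  shows "bounded_clinear (cadjoint (t \<xi>))"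
  by (rule bounded_clinear_cadjoint[OF tensor_bounded_clinear_right[OF tp] tensor_cinner_cadjoint[OF tp]])

lemma tensor_cadjoint_elem:
  fixes t :: "'b::complex_inner \<Rightarrow> 'n::chilbert \<Rightarrow> 'c::complex_inner"
  assumes tp: "is_tensor_product t"
  shows "cadjoint (t \<xi>) (t \<eta> x) = cinner \<eta> \<xi> *\<^sub>C x"
  by (rule cinner_ext)
     (simp add: tensor_cinner_cadjoint[OF tp, symmetric] tensor_cinner[OF tp] cinner_scaleC_right cinner_commute[of \<eta> \<xi>])

lemma tensor_cadjoint_nondegenerate:
  fixes t :: "'b::complex_inner \<Rightarrow> 'n::chilbert \<Rightarrow> 'c::complex_inner"
  assumes tp: "is_tensor_product t" and z: "\<And>\<xi>. cadjoint (t \<xi>) w = 0"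
  shows "w = 0"
proof -
  have bl: "bounded_linear (\<lambda>v. cinner v w)" by (rule cinner_bounded_linear_left)
  have cl: "closed {v. cinner v w = 0}"
    by (intro closed_Collect_eq continuous_on_const linear_continuous_on bl)
  have sub: "subspace {v. cinner v w = 0}"
    unfolding subspace_def by (auto simp: cinner_add_left cinner_scaleR_left)
  have "{v. cinner v w = 0} = UNIV"
  proof (rule subspace_eq_UNIV_if_dense_cspan[OF tensor_dense[OF tp] cl sub])
    fix c x assume "x \<in> range (\<lambda>(x, y). t x y)"
    then obtain \<eta> y where "x = t \<eta> y" by auto
    then show "c *\<^sub>C x \<in> {v. cinner v w = 0}"
      by (simp add: cinner_scaleC_left tensor_cinner_cadjoint[OF tp] z)
  qed
  then have "cinner w w = 0" by blast
  then show ?thesis by (simp add: cinner_eq_zero_iff)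
qed

section \<open>Commutation of the compressed backward shifts\<close>

lemma cadjoint_tensor_intertwine:
  fixes tN :: "'b::complex_inner \<Rightarrow> 'n::chilbert \<Rightarrow> 'bn::complex_inner"
    and tM :: "'b \<Rightarrow> 'm::chilbert \<Rightarrow> 'bm::complex_inner"
  assumes tN: "is_tensor_product tN" and tM: "is_tensor_product tM"
    and T: "bounded_clinear T" and F: "bounded_clinear F"
    and F_tensor: "\<And>\<eta> x. F (tN \<eta> x) = tM \<eta> (T x)"
  shows "T (cadjoint (tN \<xi>) y) = cadjoint (tM \<xi>) (F y)"
proof (rule bounded_clinear_eq_on_dense[OF
      bounded_clinear_compose[OF T tensor_cadjoint_bounded_clinear[OF tN]]
      bounded_clinear_compose[OF tensor_cadjoint_bounded_clinear[OF tM] F] tensor_dense[OF tN]])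
  fix s assume "s \<in> range (\<lambda>(x, y). tN x y)"
  then obtain \<eta> x where s: "s = tN \<eta> x" by auto
  show "T (cadjoint (tN \<xi>) s) = cadjoint (tM \<xi>) (F s)"
    by (simp add: s F_tensor tensor_cadjoint_elem[OF tN] tensor_cadjoint_elem[OF tM]
        bounded_clinear_scaleC[OF T])
qed

lemma inj_tensor_map:
  fixes tN :: "'b::complex_inner \<Rightarrow> 'n::chilbert \<Rightarrow> 'bn::chilbert"
    and tM :: "'b \<Rightarrow> 'm::chilbert \<Rightarrow> 'bm::complex_inner"
  assumes tN: "is_tensor_product tN" and tM: "is_tensor_product tM"
    and T: "bounded_clinear T" "inj T" and F: "bounded_clinear F"
    and F_tensor: "\<And>\<eta> x. F (tN \<eta> x) = tM \<eta> (T x)"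
  shows "inj F"
proof (rule injI)
  fix y1 y2 assume "F y1 = F y2"
  then have "T (cadjoint (tN \<xi>) (y1 - y2)) = T 0" for \<xi>
    by (simp add: cadjoint_tensor_intertwine[OF tN tM T(1) F F_tensor] bounded_clinear_diff[OF F]
        bounded_clinear_zero[OF T(1)] bounded_clinear_zero[OF tensor_cadjoint_bounded_clinear[OF tM]])
  then have "cadjoint (tN \<xi>) (y1 - y2) = 0" for \<xi> using T(2) by (meson injD)
  then show "y1 = y2" using tensor_cadjoint_nondegenerate[OF tN] by (metis eq_iff_diff_eq_0)
qed

lemma bounded_clinear_intertwined:
  assumes T: "bounded_clinear T" and r: "r > 0" and T_norm: "\<And>x. norm (T x) = norm x * r"
    and C: "bounded_clinear C" and intertwine: "\<And>x. T (M x) = C (T x)"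
  shows "bounded_clinear M"
proof -
  have T_inj: "u = v" if "T u = T v" for u v
    using T_norm[of "u - v"] that r by (simp add: bounded_clinear_diff[OF T])
  obtain D where D: "\<forall>x. norm (C x) \<le> D * norm x" using C unfolding bounded_clinear_def by blast
  have "clinear M" unfolding clinear_def
  proof (intro conjI allI)
    show "M (x + y) = M x + M y" for x y
      by (rule T_inj) (simp add: intertwine bounded_clinear_add[OF T] bounded_clinear_add[OF C])
    show "M (a *\<^sub>C x) = a *\<^sub>C M x" for a x
      by (rule T_inj) (simp add: intertwine bounded_clinear_scaleC[OF T] bounded_clinear_scaleC[OF C])
  qed
  moreover have "norm (M x) \<le> D * norm x" for x
  proof -
    have "norm (M x) * r = norm (C (T x))" by (simp add: T_norm intertwine[symmetric])
    also have "\<dots> \<le> D * (norm x * r)" using D T_norm by metis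
    finally show ?thesis using r by (simp add: mult.assoc[symmetric])
  qed
  ultimately show ?thesis unfolding bounded_clinear_def by blast
qed

lemma diagonal_operators_commute:
  assumes dense: "closure (cspan (range k)) = UNIV"
    and A: "bounded_clinear A" and B: "bounded_clinear B"
    and A_diag: "\<And>l. A (k l) = a l *\<^sub>C k l" and B_diag: "\<And>l. B (k l) = b l *\<^sub>C k l"
  shows "A (B x) = B (A x)"
proof (rule bounded_clinear_eq_on_dense[OF bounded_clinear_compose[OF A B]
      bounded_clinear_compose[OF B A] dense])
  fix s assume "s \<in> range k"
  then show "A (B s) = B (A s)"
    by (auto simp: A_diag B_diag bounded_clinear_scaleC[OF A] bounded_clinear_scaleC[OF B]
        scaleC_scaleC mult.commute)
qed

text \<open>The case \<open>\<N> = \<HH>(K) \<otimes> \<G>\<close>; here \<open>BsI\<close> is \<open>\<B>\<^sup>* \<otimes> I\<^sub>\<G>\<close>.\<close>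
lemma cadjoint_tensor_backward_shift_commute:
  fixes k :: "'l \<Rightarrow> 'h::chilbert"
    and tBH :: "'b::chilbert \<Rightarrow> 'h \<Rightarrow> 'bh::chilbert"
    and tHG :: "'h \<Rightarrow> 'g::chilbert \<Rightarrow> 'hg::chilbert"
    and tBHG :: "'b \<Rightarrow> 'hg \<Rightarrow> 'bhg::chilbert"
  assumes rkhs: "is_rkhs K k"
    and tens_BH: "is_tensor_product tBH" and tens_HG: "is_tensor_product tHG"
    and tens_BHG: "is_tensor_product tBHG"
    and Bop_adj: "\<forall>l. cadjoint Bop (k l) = tBH (\<beta> l) (k l)"
    and J_bdd: "\<forall>g. bounded_clinear (J g)"
    and J_tens: "\<forall>g \<xi> h. J g (tBH \<xi> h) = tBHG \<xi> (tHG h g)"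
    and BsI_bdd: "bounded_clinear BsI"
    and BsI_tens: "\<forall>h g. BsI (tHG h g) = J g (cadjoint Bop h)"
  shows "cadjoint (tBHG \<xi>) (BsI (cadjoint (tBHG \<eta>) (BsI v)))
       = cadjoint (tBHG \<eta>) (BsI (cadjoint (tBHG \<xi>) (BsI v)))"
proof -
  define c where "c \<xi> v = cadjoint (tBHG \<xi>) (BsI v)" for \<xi> v
  define M where "M \<xi> h = cadjoint (tBH \<xi>) (cadjoint Bop h)" for \<xi> h
  have c_bdd: "bounded_clinear (c \<xi>)" for \<xi>
    unfolding c_def by (rule bounded_clinear_compose[OF tensor_cadjoint_bounded_clinear[OF tens_BHG] BsI_bdd])
  have c_elem: "c \<xi> (tHG h g) = tHG (M \<xi> h) g" for \<xi> h g
    using cadjoint_tensor_intertwine[OF tens_BH tens_BHG tensor_bounded_clinear_left[OF tens_HG]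
        J_bdd[rule_format, of g], where \<xi>=\<xi> and y="cadjoint Bop h"] J_tens
    by (simp add: c_def M_def BsI_tens)
  have c_commute_elem: "c \<xi> (c \<eta> (tHG h g)) = c \<eta> (c \<xi> (tHG h g))" for h g
  proof (cases "g = 0")
    case True
    then show ?thesis
      using bounded_clinear_zero[OF tensor_bounded_clinear_right[OF tens_HG]] bounded_clinear_zero[OF c_bdd]
      by metis
  next
    case False
    have M_bdd: "bounded_clinear (M \<zeta>)" for \<zeta>
      using bounded_clinear_intertwined[where T="\<lambda>h. tHG h g" and r="norm g" and C="c \<zeta>"
          and M="M \<zeta>", OF tensor_bounded_clinear_left[OF tens_HG] _ tensor_norm[OF tens_HG] c_bdd]
        c_elem False
      by simp
    have M_diag: "M \<zeta> (k l) = cinner (\<beta> l) \<zeta> *\<^sub>C k l" for \<zeta> l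
      by (simp add: M_def Bop_adj tensor_cadjoint_elem[OF tens_BH])
    have "M \<xi> (M \<eta> h) = M \<eta> (M \<xi> h)"
      by (rule diagonal_operators_commute[where k=k, OF _ M_bdd M_bdd M_diag M_diag])
        (use rkhs in \<open>simp add: is_rkhs_def\<close>)
    then show ?thesis by (simp add: c_elem)
  qed
  have "c \<xi> (c \<eta> v) = c \<eta> (c \<xi> v)"
  proof (rule bounded_clinear_eq_on_dense[OF bounded_clinear_compose[OF c_bdd c_bdd]
        bounded_clinear_compose[OF c_bdd c_bdd] tensor_dense[OF tens_HG]])
    fix s assume "s \<in> range (\<lambda>(h, g). tHG h g)"
    then show "c \<xi> (c \<eta> s) = c \<eta> (c \<xi> s)" using c_commute_elem by auto
  qed
  then show ?thesis by (simp add: c_def)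
qed

theorem mainTheorem13:
  fixes K :: "'l \<Rightarrow> 'l \<Rightarrow> complex" and l\<^sub>0 :: 'l
    and \<beta> :: "'l \<Rightarrow> 'b::chilbert"
    and k :: "'l \<Rightarrow> 'h::chilbert"
    and tBH :: "'b \<Rightarrow> 'h \<Rightarrow> 'bh::chilbert"
    and Bop :: "'bh \<Rightarrow> 'h"
    and tHG :: "'h \<Rightarrow> 'g::chilbert \<Rightarrow> 'hg::chilbert"
    and tBHG :: "'b \<Rightarrow> 'hg \<Rightarrow> 'bhg::chilbert"
    and J :: "'g \<Rightarrow> 'bh \<Rightarrow> 'bhg"
    and BsI :: "'hg \<Rightarrow> 'bhg"
    and \<iota> :: "'n::chilbert \<Rightarrow> 'hg"
    and tBN :: "'b \<Rightarrow> 'n \<Rightarrow> 'bn::chilbert"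
    and IBi :: "'bn \<Rightarrow> 'bhg"
  assumes pick: "is_pick_kernel K l\<^sub>0 \<beta>"
    and rkhs: "is_rkhs K k"
    and tens_BH: "is_tensor_product tBH"
    and tens_HG: "is_tensor_product tHG"
    and tens_BHG: "is_tensor_product tBHG"
    and tens_BN: "is_tensor_product tBN"
    and Bop_bdd: "bounded_clinear Bop"
    and Bop_contr: "\<forall>x. norm (Bop x) \<le> norm x"
    and Bop_adj: "\<forall>l. cadjoint Bop (k l) = tBH (\<beta> l) (k l)"
    and J_bdd: "\<forall>g. bounded_clinear (J g)"
    and J_tens: "\<forall>g \<xi> h. J g (tBH \<xi> h) = tBHG \<xi> (tHG h g)"
    and BsI_bdd: "bounded_clinear BsI"
    and BsI_tens: "\<forall>h g. BsI (tHG h g) = J g (cadjoint Bop h)"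
    and incl_bdd: "bounded_clinear \<iota>"
    and incl_inj: "inj \<iota>"
    and incl_contr: "\<forall>x. norm (\<iota> x) \<le> norm x"
    and IBi_bdd: "bounded_clinear IBi"
    and IBi_tens: "\<forall>\<xi> x. IBi (tBN \<xi> x) = tBHG \<xi> (\<iota> x)"
    and invariant: "\<forall>x. BsI (\<iota> x) \<in> range IBi"
  shows "let a = (\<lambda>x. THE y. IBi y = BsI (\<iota> x));
             ax = (\<lambda>\<xi> x. cadjoint (tBN \<xi>) (a x))
         in \<forall>\<xi> \<eta> x. ax \<xi> (ax \<eta> x) = ax \<eta> (ax \<xi> x)"
proof -
  define a where "a x = (THE y. IBi y = BsI (\<iota> x))" for x
  have IBi_inj: "inj IBi"
    by (rule inj_tensor_map[OF tens_BN tens_BHG incl_bdd incl_inj IBi_bdd]) (simp add: IBi_tens)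
  have a: "IBi (a x) = BsI (\<iota> x)" for x
  proof -
    obtain y where y: "IBi y = BsI (\<iota> x)" using invariant by (metis rangeE)
    have "a x = y" unfolding a_def by (rule the_equality; use y IBi_inj in \<open>metis injD\<close>)
    with y show ?thesis by simp
  qed
  have compression: "\<iota> (cadjoint (tBN \<xi>) (a x)) = cadjoint (tBHG \<xi>) (BsI (\<iota> x))" for \<xi> x
    using cadjoint_tensor_intertwine[OF tens_BN tens_BHG incl_bdd IBi_bdd] IBi_tens a by simp
  have "\<iota> (cadjoint (tBN \<xi>) (a (cadjoint (tBN \<eta>) (a x))))
      = \<iota> (cadjoint (tBN \<eta>) (a (cadjoint (tBN \<xi>) (a x))))" for \<xi> \<eta> x
    using cadjoint_tensor_backward_shift_commute[OF rkhs tens_BH tens_HG tens_BHG Bop_adj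
        J_bdd J_tens BsI_bdd BsI_tens]
    by (simp add: compression)
  then show ?thesis
    using incl_inj unfolding Let_def a_def[symmetric] by (meson injD)
qed

end
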